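(* Let $d,k\ge 1$ be integers. Let $z$ be a random vector in $\mathbb{R}^d$ with finite second moments whose covariance matrix $\Sigma\in\mathbb{R}^{d\times d}$ is positive definite, and let $\lambda_{\max}$ denote the largest eigenvalue of $\Sigma$. Let $W_c\in\mathbb{R}^{k\times d}$ be a random matrix, independent of $z$, with i.i.d. standard Gaussian entries, and set $g(z)=W_c z$. Fix any $w\in\mathbb{R}^d$, $b\in\mathbb{R}$ and let $f(z)=w^\top z+b$. For $\tilde w\in\mathbb{R}^k$, $\tilde b\in\mathbb{R}$ let $\tilde f(z)=\tilde w^\top g(z)+\tilde b$. Define $$E(k)=\mathbb{E}_{W_c}\Big[\min_{(\tilde w,\tilde b)\in\mathbb{R}^k\times\mathbb{R}}\ \mathbb{E}_z\big[|f(z)-\tilde f(z)|^2\big]\Big].$$ Then $$E(k)\le\begin{cases}\lambda_{\max}\left(1-\frac{k}{d}\right)\|w\|_2^2, & k<d,\\ 0, & k\ge d.\end{cases}$$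
   Context: Here $\mathbb{E}_z$ denotes expectation over the distribution of $z$ with $W_c$ held fixed, and $\mathbb{E}_{W_c}$ denotes expectation over the Gaussian matrix $W_c$. (Interpretation: $g$ is a randomly initialized linear "concept bottleneck layer" with $k$ concepts, and $\tilde f$ is a linear classifier on top of it.) *)

theory Defs
  imports "HOL-Probability.Probability"
begin

definition std_gaussian :: "real measure" where
  "std_gaussian = density lborel std_normal_density"

definition gaussian_matrix :: "(real ^ 'd ^ 'k) measure" where
  "gaussian_matrix =
     distr (PiM (UNIV :: ('k \<times> 'd) set) (\<lambda>_. std_gaussian)) borel
           (\<lambda>f. \<chi> i j. f (i, j))"

definition mean_vec :: "(real ^ 'd) measure \<Rightarrow> real ^ 'd" where
  "mean_vec M = (\<chi> i. \<integral>z. z $ i \<partial>M)"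

definition cov_matrix :: "(real ^ 'd) measure \<Rightarrow> real ^ 'd ^ 'd" where
  "cov_matrix M = (\<chi> i j. \<integral>z. (z $ i - mean_vec M $ i) * (z $ j - mean_vec M $ j) \<partial>M)"

definition pos_def_matrix :: "real ^ 'n ^ 'n \<Rightarrow> bool" where
  "pos_def_matrix A \<longleftrightarrow> (\<forall>v. v \<noteq> 0 \<longrightarrow> v \<bullet> (A *v v) > 0)"

definition is_eigenvalue :: "real ^ 'n ^ 'n \<Rightarrow> real \<Rightarrow> bool" where
  "is_eigenvalue A l \<longleftrightarrow> (\<exists>v. v \<noteq> 0 \<and> A *v v = l *\<^sub>R v)"

definition largest_eigenvalue :: "real ^ 'n ^ 'n \<Rightarrow> real" where
  "largest_eigenvalue A = Max {l. is_eigenvalue A l}"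

end

theory Submission
  imports Defs
begin

text \<open>For a fixed bottleneck matrix \<open>W\<close>, the affine fits of \<open>g(z) = W z\<close> can realise every
  linear functional in the row space of \<open>W\<close>.  Fitting the orthogonal projection of \<open>w\<close> and
  centring leaves the error \<open>r\<^sup>T (z - \<mu>)\<close>, where \<open>r\<close> is the component of \<open>w\<close>
  orthogonal to the row space, so the optimal error is at most \<open>r\<^sup>T \<Sigma> r \<le> \<lambda>\<^sub>m\<^sub>a\<^sub>x |r|\<^sup>2\<close>.

  Averaging over \<open>W\<close>: flipping the sign of a column or swapping two columns does not change
  the law of \<open>W\<close>, so the expected Gram matrix of the residuals of the unit vectors is
  \<open>c I\<close>.  Its trace is \<open>d - rank W\<close>, and \<open>rank W = min k d\<close> almost surely, since
  a Gaussian row falls into the span of finitely many other rows, a proper subspace, with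
  probability zero.  Hence \<open>E |r|\<^sup>2 = c |w|\<^sup>2 \<le> (1 - min k d / d) |w|\<^sup>2\<close>.\<close>


section \<open>Orthogonal projection onto a subspace\<close>

definition orth_proj :: "'a::euclidean_space set \<Rightarrow> 'a \<Rightarrow> 'a" where
  "orth_proj V x = (SOME y. y \<in> V \<and> (\<forall>u\<in>V. (x - y) \<bullet> u = 0))"

definition orth_residual :: "'a::euclidean_space set \<Rightarrow> 'a \<Rightarrow> 'a" where
  "orth_residual V x = x - orth_proj V x"

context
  fixes V :: "'a::euclidean_space set"
  assumes V: "subspace V"
begin

lemma orth_proj_spec: "orth_proj V x \<in> V \<and> (\<forall>u\<in>V. (x - orth_proj V x) \<bullet> u = 0)"
proof -
  obtain y z where "y \<in> span V" "\<And>w. w \<in> span V \<Longrightarrow> orthogonal z w" "x = y + z"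
    using orthogonal_subspace_decomp_exists[of V x] by blast
  then have "\<exists>y. y \<in> V \<and> (\<forall>u\<in>V. (x - y) \<bullet> u = 0)"
    using V by (metis add_diff_cancel_left' orthogonal_def span_eq_iff)
  then show ?thesis unfolding orth_proj_def by (rule someI_ex)
qed

lemma orth_proj_in: "orth_proj V x \<in> V"
  using orth_proj_spec by blast

lemma inner_orth_residual_eq_0: "u \<in> V \<Longrightarrow> orth_residual V x \<bullet> u = 0"
  using orth_proj_spec unfolding orth_residual_def by blast

lemma orth_proj_unique:
  assumes "y \<in> V" "\<And>u. u \<in> V \<Longrightarrow> (x - y) \<bullet> u = 0"
  shows "orth_proj V x = y"
proof -
  have "y - orth_proj V x \<in> V"
    using assms(1) orth_proj_in V by (simp add: subspace_diff)
  then have "(x - orth_proj V x) \<bullet> (y - orth_proj V x) - (x - y) \<bullet> (y - orth_proj V x) = 0"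
    using orth_proj_spec assms(2) by simp
  then have "(y - orth_proj V x) \<bullet> (y - orth_proj V x) = 0"
    by (simp add: inner_diff_left inner_diff_right)
  then show ?thesis by simp
qed

lemma linear_orth_proj: "linear (orth_proj V)"
proof
  fix x y :: 'a and c :: real
  show "orth_proj V (x + y) = orth_proj V x + orth_proj V y"
    using orth_proj_spec[of x] orth_proj_spec[of y] V
    by (intro orth_proj_unique) (auto simp: subspace_add algebra_simps inner_diff_left inner_add_left)
  show "orth_proj V (c *\<^sub>R x) = c *\<^sub>R orth_proj V x"
    using orth_proj_spec[of x] V
    by (intro orth_proj_unique) (auto simp: subspace_scale inner_diff_left simp flip: scaleR_diff_right)
qed

lemma linear_orth_residual: "linear (orth_residual V)"
  unfolding orth_residual_def[abs_def] by (intro linear_compose_sub linear_ident linear_orth_proj)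

lemma inner_orth_residual: "orth_residual V x \<bullet> orth_residual V y = x \<bullet> orth_residual V y"
proof -
  have "orth_proj V x \<bullet> orth_residual V y = 0"
    using inner_orth_residual_eq_0[OF orth_proj_in] by (simp add: inner_commute)
  then show ?thesis by (simp add: orth_residual_def inner_diff_left)
qed

lemma norm_orth_residual_le: "u \<in> V \<Longrightarrow> norm (orth_residual V x) \<le> norm (x - u)"
proof -
  assume u: "u \<in> V"
  have "orth_residual V x \<bullet> (orth_proj V x - u) = 0"
    using u V orth_proj_in by (intro inner_orth_residual_eq_0) (simp add: subspace_diff)
  moreover have "x - u = orth_residual V x + (orth_proj V x - u)"
    by (simp add: orth_residual_def)
  ultimately have "(norm (x - u))\<^sup>2 = (norm (orth_residual V x))\<^sup>2 + (norm (orth_proj V x - u))\<^sup>2"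
    by (metis norm_add_Pythagorean orthogonal_def)
  then show ?thesis by (metis le_add_same_cancel1 zero_le_power2 norm_ge_zero power2_le_imp_le)
qed

lemma norm_orth_residual_le_norm: "norm (orth_residual V x) \<le> norm x"
  using norm_orth_residual_le[of 0] V by (simp add: subspace_0)

end

lemma orth_residual_isometry_image:
  fixes V :: "'a::euclidean_space set"
  assumes V: "subspace V" and F: "linear F" "\<And>x y. F x \<bullet> F y = x \<bullet> y" and G: "\<And>x. F (G x) = x"
  shows "orth_residual (F ` V) x = F (orth_residual V (G x))"
proof -
  have residual: "x - F (orth_proj V (G x)) = F (orth_residual V (G x))"
    by (metis G F(1) linear_diff orth_residual_def)
  moreover have "orth_proj (F ` V) x = F (orth_proj V (G x))"
  proof (rule orth_proj_unique)
    show "subspace (F ` V)" using V F(1) by (simp add: linear_subspace_image)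
    show "F (orth_proj V (G x)) \<in> F ` V" using orth_proj_in[OF V] by blast
    show "(x - F (orth_proj V (G x))) \<bullet> u = 0" if "u \<in> F ` V" for u
      using that residual F(2) inner_orth_residual_eq_0[OF V] by auto
  qed
  ultimately show ?thesis by (simp add: orth_residual_def)
qed

lemma sum_sqnorm_orth_residual_axis:
  fixes V :: "(real ^ 'd) set"
  assumes V: "subspace V"
  shows "(\<Sum>i\<in>UNIV. (norm (orth_residual V (axis i 1)))\<^sup>2) = real CARD('d) - real (dim V)"
proof -
  obtain B where B: "B \<subseteq> V" "pairwise orthogonal B" "\<And>x. x \<in> B \<Longrightarrow> norm x = 1"
    "independent B" "card B = dim V" "span B = V"
    using orthonormal_basis_subspace[OF V] by blast
  have fB: "finite B" using B(4) by (simp add: independent_imp_finite)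
  have proj: "orth_proj V x = (\<Sum>b\<in>B. (b \<bullet> x) *\<^sub>R b)" for x
  proof (rule orth_proj_unique[OF V])
    show "(\<Sum>b\<in>B. (b \<bullet> x) *\<^sub>R b) \<in> V"
      using B(1) V by (intro subspace_sum[OF V]) (auto intro: subspace_scale)
    have "orthogonal (x - (\<Sum>b\<in>B. (b \<bullet> x) *\<^sub>R b)) c" if c: "c \<in> B" for c
    proof -
      have "(\<Sum>b\<in>B. (b \<bullet> x) *\<^sub>R b) \<bullet> c = (\<Sum>b\<in>{c}. (b \<bullet> x) * (b \<bullet> c))"
        unfolding inner_sum_left inner_scaleR_left using c B(2) fB
        by (intro sum.mono_neutral_right) (auto simp: pairwise_def orthogonal_def)
      also have "\<dots> = c \<bullet> x"
        using B(3)[OF c] by (simp add: inner_commute flip: power2_norm_eq_inner)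
      finally show ?thesis by (simp add: orthogonal_def inner_diff_right inner_commute)
    qed
    then show "(x - (\<Sum>b\<in>B. (b \<bullet> x) *\<^sub>R b)) \<bullet> u = 0" if "u \<in> V" for u
      using that B(6) orthogonal_to_span unfolding orthogonal_def by blast
  qed
  have residual: "(norm (orth_residual V (axis i 1)))\<^sup>2 = 1 - (\<Sum>b\<in>B. (b $ i)\<^sup>2)" for i
  proof -
    have "(norm (orth_residual V (axis i 1)))\<^sup>2 = axis i 1 \<bullet> orth_residual V (axis i 1)"
      by (simp add: power2_norm_eq_inner inner_orth_residual[OF V])
    also have "\<dots> = 1 - (\<Sum>b\<in>B. (b $ i)\<^sup>2)"
      by (simp add: orth_residual_def proj inner_diff_right inner_sum_right inner_axis inner_axis'
          power2_eq_square)
    finally show ?thesis .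
  qed
  have unit: "(\<Sum>i\<in>UNIV. (b $ i)\<^sup>2) = 1" if "b \<in> B" for b
    using B(3)[OF that] by (simp add: norm_eq_1 inner_vec_def power2_eq_square)
  have "(\<Sum>i\<in>UNIV. (norm (orth_residual V (axis i 1)))\<^sup>2) = real CARD('d) - (\<Sum>b\<in>B. \<Sum>i\<in>UNIV. (b $ i)\<^sup>2)"
    by (simp add: residual sum_subtractf sum.swap[of _ UNIV B])
  also have "\<dots> = real CARD('d) - real (dim V)"
    using unit B(5) by simp
  finally show ?thesis .
qed

section \<open>The largest eigenvalue of a symmetric matrix\<close>

lemma linear_coeff_eq_0_if_quadratic_nonneg:
  fixes a b :: real
  assumes "\<And>t. 0 \<le> a * t + b * t\<^sup>2"
  shows "a = 0"
proof (rule ccontr)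
  assume "a \<noteq> 0"
  define c where "c = \<bar>b\<bar> + 1"
  have c: "c > 0" "b / c < 1"
    by (auto simp: c_def)
  have "a * (- a / c) + b * (- a / c)\<^sup>2 = a\<^sup>2 / c * (b / c - 1)"
    using c(1) by (simp add: field_simps power2_eq_square)
  also have "\<dots> < 0"
    using \<open>a \<noteq> 0\<close> c by (intro mult_pos_neg) auto
  finally show False using assms[of "- a / c"] by simp
qed

lemma selfadjoint_nonneg_form_eq_0:
  fixes f :: "'a::real_inner \<Rightarrow> 'a"
  assumes f: "linear f" "\<And>x y. x \<bullet> f y = f x \<bullet> y"
    and nonneg: "\<And>v. 0 \<le> v \<bullet> f v" and x: "x \<bullet> f x = 0"
  shows "f x = 0"
proof -
  have "(x + t *\<^sub>R f x) \<bullet> f (x + t *\<^sub>R f x) = 2 * (f x \<bullet> f x) * t + (f x \<bullet> f (f x)) * t\<^sup>2" for t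
  proof -
    have "f (x + t *\<^sub>R f x) = f x + t *\<^sub>R f (f x)"
      using f(1) by (simp add: linear_add linear_scale)
    moreover have "x \<bullet> f (f x) = f x \<bullet> f x"
      using f(2) by simp
    ultimately show ?thesis
      using x by (simp add: inner_add_left inner_add_right inner_commute[of "f x" x] power2_eq_square)
        (simp add: algebra_simps)
  qed
  then have "0 \<le> 2 * (f x \<bullet> f x) * t + (f x \<bullet> f (f x)) * t\<^sup>2" for t
    using nonneg by metis
  then have "2 * (f x \<bullet> f x) = 0"
    by (rule linear_coeff_eq_0_if_quadratic_nonneg)
  then show ?thesis by simp
qed

lemma inner_matrix_vector_symmetric:
  fixes A :: "real ^ 'n ^ 'n"
  assumes "transpose A = A"
  shows "x \<bullet> (A *v y) = (A *v x) \<bullet> y"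
  by (metis assms dot_lmul_matrix vector_transpose_matrix)

lemma finite_eigenvalues_symmetric:
  fixes A :: "real ^ 'n ^ 'n"
  assumes A: "transpose A = A"
  shows "finite {l. is_eigenvalue A l}"
proof -
  define E where "E = {l. is_eigenvalue A l}"
  define ev where "ev l = (SOME v. v \<noteq> 0 \<and> A *v v = l *\<^sub>R v)" for l
  have ev: "ev l \<noteq> 0 \<and> A *v ev l = l *\<^sub>R ev l" if "l \<in> E" for l
  proof -
    have "\<exists>v. v \<noteq> 0 \<and> A *v v = l *\<^sub>R v"
      using that unfolding E_def is_eigenvalue_def by simp
    then show ?thesis unfolding ev_def by (rule someI_ex)
  qed
  have inj: "inj_on ev E"
  proof
    fix l1 l2 assume l: "l1 \<in> E" "l2 \<in> E" "ev l1 = ev l2"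
    then have "l1 *\<^sub>R ev l1 = l2 *\<^sub>R ev l1"
      using ev[OF l(1)] ev[OF l(2)] by metis
    then show "l1 = l2"
      using ev[OF l(1)] by (simp add: scaleR_cancel_right)
  qed
  have "pairwise orthogonal (ev ` E)"
    unfolding pairwise_def
  proof clarify
    fix l1 l2 assume l: "l1 \<in> E" "l2 \<in> E" "ev l1 \<noteq> ev l2"
    have "l2 * (ev l1 \<bullet> ev l2) = ev l1 \<bullet> (A *v ev l2)"
      using ev[OF l(2)] by simp
    also have "\<dots> = (A *v ev l1) \<bullet> ev l2"
      by (rule inner_matrix_vector_symmetric[OF A])
    also have "\<dots> = l1 * (ev l1 \<bullet> ev l2)"
      using ev[OF l(1)] by simp
    finally show "orthogonal (ev l1) (ev l2)"
      using l by (auto simp: orthogonal_def)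
  qed
  moreover have "0 \<notin> ev ` E"
    using ev by auto
  ultimately have "independent (ev ` E)"
    by (rule pairwise_orthogonal_independent)
  then have "finite (ev ` E)"
    by (rule independent_imp_finite)
  then show ?thesis
    using inj finite_imageD unfolding E_def by blast
qed

text \<open>Rayleigh: a maximiser \<open>v\<^sub>0\<close> of the quadratic form on the unit sphere makes
  \<open>m I - A\<close> positive semidefinite with \<open>v\<^sub>0\<close> in the null set of its form, hence
  \<open>v\<^sub>0\<close> is an eigenvector for the maximum \<open>m\<close>.\<close>
lemma eigenvalue_bounds_quadratic_form:
  fixes A :: "real ^ 'n ^ 'n"
  assumes A: "transpose A = A"
  obtains m where "is_eigenvalue A m" "\<And>v. v \<bullet> (A *v v) \<le> m * (norm v)\<^sup>2"
proof -
  let ?q = "\<lambda>v. v \<bullet> (A *v v)"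
  have "sphere (0::real^'n) 1 \<noteq> {}"
    by (metis norm_axis_1 mem_sphere_0 empty_iff)
  moreover have "continuous_on (sphere 0 1) ?q"
    by (intro continuous_intros)
  ultimately obtain v0 where "v0 \<in> sphere 0 1" "\<forall>y\<in>sphere 0 1. ?q y \<le> ?q v0"
    using continuous_attains_sup[OF compact_sphere] by blast
  then have v0: "norm v0 = 1" "\<And>y. norm y = 1 \<Longrightarrow> ?q y \<le> ?q v0"
    by auto
  define m where "m = ?q v0"
  have bound: "?q v \<le> m * (norm v)\<^sup>2" for v
  proof (cases "v = 0")
    case False
    then have "?q (v /\<^sub>R norm v) \<le> m"
      unfolding m_def by (intro v0(2)) simp
    moreover have "?q (v /\<^sub>R norm v) = ?q v / (norm v)\<^sup>2"
      by (simp add: matrix_vector_mult_scaleR power2_eq_square divide_inverse mult_ac)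
    ultimately show ?thesis using False by (simp add: divide_le_eq mult.commute)
  qed simp
  define f where "f v = m *\<^sub>R v - A *v v" for v
  have "f v0 = 0"
  proof (rule selfadjoint_nonneg_form_eq_0[of f])
    show "linear f"
      unfolding f_def[abs_def] by (intro linear_compose_sub linear_scaleR matrix_vector_mul_linear)
    show "x \<bullet> f y = f x \<bullet> y" for x y
      using inner_matrix_vector_symmetric[OF A, of x y]
      by (simp add: f_def inner_diff_left inner_diff_right inner_commute[of x y])
    show "0 \<le> v \<bullet> f v" for v
      using bound[of v] by (simp add: f_def inner_diff_right power2_norm_eq_inner)
    show "v0 \<bullet> f v0 = 0"
      using v0(1) by (simp add: f_def m_def inner_diff_right norm_eq_1)
  qed
  then have "A *v v0 = m *\<^sub>R v0"
    by (simp add: f_def)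
  moreover have "v0 \<noteq> 0"
    using v0(1) by auto
  ultimately have "is_eigenvalue A m"
    unfolding is_eigenvalue_def by blast
  then show ?thesis using bound that by blast
qed

lemma quadratic_form_le_largest_eigenvalue:
  fixes A :: "real ^ 'n ^ 'n"
  assumes A: "transpose A = A"
  shows "v \<bullet> (A *v v) \<le> largest_eigenvalue A * (norm v)\<^sup>2"
proof -
  obtain m where m: "is_eigenvalue A m" "\<And>v. v \<bullet> (A *v v) \<le> m * (norm v)\<^sup>2"
    using eigenvalue_bounds_quadratic_form[OF A] by blast
  have "m \<le> largest_eigenvalue A"
    unfolding largest_eigenvalue_def using finite_eigenvalues_symmetric[OF A] m(1) by (intro Max_ge) auto
  then show ?thesis
    using m(2)[of v] by (meson mult_right_mono order_trans zero_le_power2)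
qed

lemma largest_eigenvalue_pos:
  fixes A :: "real ^ 'n ^ 'n"
  assumes "transpose A = A" "pos_def_matrix A"
  shows "largest_eigenvalue A > 0"
proof -
  have "0 < axis undefined 1 \<bullet> (A *v axis undefined 1)"
    using assms(2) unfolding pos_def_matrix_def by (simp add: axis_eq_0_iff)
  also have "\<dots> \<le> largest_eigenvalue A * (norm (axis undefined 1 :: real ^ 'n))\<^sup>2"
    by (rule quadratic_form_le_largest_eigenvalue[OF assms(1)])
  finally show ?thesis by simp
qed

section \<open>The best affine fit through a fixed bottleneck\<close>

lemma transpose_cov_matrix: "transpose (cov_matrix M) = cov_matrix M"
  by (simp add: transpose_def cov_matrix_def vec_eq_iff mult.commute)

lemma integrable_product_shifted_components:
  fixes M :: "(real ^ 'd) measure"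
  assumes S: "sets M = sets borel" and I: "integrable M (\<lambda>z. norm z ^ 2)" and "finite_measure M"
  shows "integrable M (\<lambda>z. (z $ i - c) * (z $ j - c'))"
proof -
  interpret finite_measure M by fact
  let ?C = "\<bar>c\<bar> + \<bar>c'\<bar>"
  show ?thesis
  proof (rule Bochner_Integration.integrable_bound)
    show "integrable M (\<lambda>z. 2 * norm z ^ 2 + 2 * ?C\<^sup>2)"
      using I by (intro Bochner_Integration.integrable_add integrable_mult_right) auto
    show "(\<lambda>z. (z $ i - c) * (z $ j - c')) \<in> borel_measurable M"
      unfolding measurable_cong_sets[OF S refl]
      by (intro borel_measurable_continuous_onI continuous_intros)
    have "\<bar>(z $ i - c) * (z $ j - c')\<bar> \<le> 2 * norm z ^ 2 + 2 * ?C\<^sup>2" for z :: "real ^ 'd"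
    proof -
      have "\<bar>(z $ i - c) * (z $ j - c')\<bar> \<le> (norm z + ?C) * (norm z + ?C)"
        unfolding abs_mult using component_le_norm_cart[of z i] component_le_norm_cart[of z j]
        by (intro mult_mono) auto
      also have "\<dots> \<le> 2 * norm z ^ 2 + 2 * ?C\<^sup>2"
        using zero_le_power2[of "norm z - ?C"] by (simp add: power2_eq_square algebra_simps)
      finally show ?thesis .
    qed
    then show "AE z in M. norm ((z $ i - c) * (z $ j - c')) \<le> norm (2 * norm z ^ 2 + 2 * ?C\<^sup>2)"
      by simp
  qed
qed

lemma nn_integral_sq_inner_centered:
  fixes M :: "(real ^ 'd) measure"
  assumes "sets M = sets borel" "integrable M (\<lambda>z. norm z ^ 2)" "finite_measure M"
  shows "(\<integral>\<^sup>+z. ennreal ((v \<bullet> (z - mean_vec M))\<^sup>2) \<partial>M) = ennreal (v \<bullet> (cov_matrix M *v v))"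
proof -
  let ?mu = "mean_vec M"
  let ?c = "\<lambda>i j z. (z $ i - ?mu $ i) * (z $ j - ?mu $ j)"
  have int: "integrable M (?c i j)" for i j
    using integrable_product_shifted_components[OF assms] .
  have expand: "(v \<bullet> (z - ?mu))\<^sup>2 = (\<Sum>i\<in>UNIV. \<Sum>j\<in>UNIV. v $ i * v $ j * ?c i j z)" for z
    by (simp add: power2_eq_square inner_vec_def sum_product mult_ac)
  have "integrable M (\<lambda>z. (v \<bullet> (z - ?mu))\<^sup>2)"
    unfolding expand using int by auto
  then have "(\<integral>\<^sup>+z. ennreal ((v \<bullet> (z - ?mu))\<^sup>2) \<partial>M) = ennreal (\<integral>z. (v \<bullet> (z - ?mu))\<^sup>2 \<partial>M)"
    by (intro nn_integral_eq_integral) auto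
  also have "(\<integral>z. (v \<bullet> (z - ?mu))\<^sup>2 \<partial>M) = (\<Sum>i\<in>UNIV. \<Sum>j\<in>UNIV. v $ i * v $ j * (\<integral>z. ?c i j z \<partial>M))"
    unfolding expand using int by (simp add: Bochner_Integration.integral_sum)
  also have "\<dots> = v \<bullet> (cov_matrix M *v v)"
    by (simp add: cov_matrix_def inner_vec_def matrix_vector_mult_def sum_distrib_left mult_ac)
  finally show ?thesis .
qed

lemma continuous_on_vector_matrix_mult [continuous_intros]:
  fixes f :: "'a::topological_space \<Rightarrow> real ^ 'm" and g :: "'a \<Rightarrow> real ^ 'n ^ 'm"
  assumes "continuous_on S f" "continuous_on S g"
  shows "continuous_on S (\<lambda>x. f x v* g x)"
  unfolding vector_matrix_mult_def using assms by (intro continuous_intros)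

lemma vector_matrix_mult_eq_sum_rows: "a v* W = (\<Sum>r\<in>UNIV. a $ r *\<^sub>R W $ r)"
  by (simp add: vec_eq_iff vector_matrix_mult_def sum_component mult.commute)

lemma axis_vector_matrix_mult:
  fixes W :: "real ^ 'd ^ 'k"
  shows "axis l 1 v* W = W $ l"
  unfolding vector_matrix_mult_eq_sum_rows
  by (simp add: axis_def if_distrib[of "\<lambda>c. c *\<^sub>R _"] cong: if_cong)

definition row_space :: "real ^ 'd ^ 'k \<Rightarrow> (real ^ 'd) set" where
  "row_space W = range (\<lambda>a. a v* W)"

lemma row_space_eq_range_transpose: "row_space W = range ((*v) (transpose W))"
  by (simp add: row_space_def)

lemma subspace_row_space: "subspace (row_space W)"
  unfolding row_space_eq_range_transpose
  by (intro linear_subspace_image matrix_vector_mul_linear subspace_UNIV)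

lemma rank_eq_dim_row_space: "rank W = dim (row_space W)"
  by (metis rank_transpose rank_dim_range row_space_eq_range_transpose)

text \<open>The witness takes \<open>W\<^sup>T w\<^sup>~\<close> to be the projection of \<open>w\<close> onto the row space and
  \<open>b\<^sup>~ = b + r\<^sup>T \<mu>\<close>, leaving the error \<open>r\<^sup>T (z - \<mu>)\<close> for the residual \<open>r\<close> of \<open>w\<close>.\<close>
lemma INF_affine_fit_error_le:
  fixes M :: "(real ^ 'd) measure" and W :: "real ^ 'd ^ 'k"
  assumes "sets M = sets borel" "integrable M (\<lambda>z. norm z ^ 2)" "finite_measure M"
  shows "(INF p \<in> (UNIV :: ((real ^ 'k) \<times> real) set).
              \<integral>\<^sup>+ z. ennreal (\<bar>(w \<bullet> z + b) - (fst p \<bullet> (W *v z) + snd p)\<bar> ^ 2) \<partial>M)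
         \<le> ennreal (largest_eigenvalue (cov_matrix M) * (norm (orth_residual (row_space W) w))\<^sup>2)"
proof -
  let ?r = "orth_residual (row_space W) w" and ?mu = "mean_vec M"
  obtain a where a: "a v* W = orth_proj (row_space W) w"
    using orth_proj_in[OF subspace_row_space] unfolding row_space_def by (metis imageE)
  have "(w \<bullet> z + b) - (a \<bullet> (W *v z) + (b + ?r \<bullet> ?mu)) = ?r \<bullet> (z - ?mu)" for z
    by (simp add: a orth_residual_def inner_diff_left inner_diff_right flip: dot_lmul_matrix)
  then have "(INF p \<in> UNIV. \<integral>\<^sup>+ z. ennreal (\<bar>(w \<bullet> z + b) - (fst p \<bullet> (W *v z) + snd p)\<bar> ^ 2) \<partial>M)
        \<le> \<integral>\<^sup>+ z. ennreal ((?r \<bullet> (z - ?mu))\<^sup>2) \<partial>M"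
    by (intro INF_lower2[of "(a, b + ?r \<bullet> ?mu)"]) auto
  also have "\<dots> = ennreal (?r \<bullet> (cov_matrix M *v ?r))"
    by (rule nn_integral_sq_inner_centered[OF assms])
  also have "\<dots> \<le> ennreal (largest_eigenvalue (cov_matrix M) * (norm ?r)\<^sup>2)"
    by (intro ennreal_leI quadratic_form_le_largest_eigenvalue transpose_cov_matrix)
  finally show ?thesis .
qed

section \<open>Gaussian matrices and their column symmetries\<close>

lemma prob_space_std_gaussian: "prob_space std_gaussian"
  unfolding std_gaussian_def by (rule prob_space_normal_density) simp

lemma sets_std_gaussian [measurable_cong]: "sets std_gaussian = sets borel"
  unfolding std_gaussian_def by simp

lemma space_std_gaussian [simp]: "space std_gaussian = UNIV"
  unfolding std_gaussian_def by simp

lemma distr_uminus_std_gaussian: "distr std_gaussian std_gaussian uminus = std_gaussian"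
proof -
  have "density (distr lborel borel uminus) std_normal_density
      = distr (density lborel (\<lambda>x. std_normal_density (- x))) borel uminus"
    by (rule density_distr) auto
  then have "distr std_gaussian borel uminus = std_gaussian"
    unfolding std_gaussian_def lborel_distr_uminus by (simp add: std_normal_density_def)
  moreover have "distr std_gaussian std_gaussian uminus = distr std_gaussian borel uminus"
    by (rule distr_cong) (simp_all add: sets_std_gaussian)
  ultimately show ?thesis by simp
qed

lemma emeasure_std_gaussian_singleton: "emeasure std_gaussian {t} = 0"
  unfolding std_gaussian_def
  by (subst emeasure_density) (auto simp: nn_integral_indicator_singleton)

lemma distr_PiM_componentwise:
  fixes M :: "'i \<Rightarrow> 'a measure"
  assumes fin: "finite I" and P: "\<And>i. prob_space (M i)"
    and h: "\<And>i. h i \<in> measurable (M i) (M i)" and d: "\<And>i. distr (M i) (M i) (h i) = M i"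
  shows "distr (PiM I M) (PiM I M) (\<lambda>f. \<lambda>i\<in>I. h i (f i)) = PiM I M"
proof -
  interpret product_prob_space M
    using P by (simp add: product_prob_space_def product_prob_space_axioms_def
        product_sigma_finite_def prob_space_imp_sigma_finite)
  let ?h = "\<lambda>f. \<lambda>i\<in>I. h i (f i)"
  have mh: "?h \<in> measurable (PiM I M) (PiM I M)"
    using h by (intro measurable_restrict measurable_compose[OF measurable_component_singleton]) auto
  show ?thesis
  proof (rule PiM_eqI[OF fin])
    fix A assume A: "\<And>i. i \<in> I \<Longrightarrow> A i \<in> sets (M i)"
    have "?h -` Pi\<^sub>E I A \<inter> space (PiM I M) = Pi\<^sub>E I (\<lambda>i. h i -` A i \<inter> space (M i))"
      by (auto simp: space_PiM PiE_iff)
    then have "emeasure (distr (PiM I M) (PiM I M) ?h) (Pi\<^sub>E I A)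
        = emeasure (PiM I M) (Pi\<^sub>E I (\<lambda>i. h i -` A i \<inter> space (M i)))"
      using A by (subst emeasure_distr[OF mh]) (auto intro: sets_PiM_I_finite fin)
    also have "\<dots> = (\<Prod>i\<in>I. emeasure (M i) (h i -` A i \<inter> space (M i)))"
      using A h fin by (intro emeasure_PiM) (auto simp: measurable_sets)
    also have "\<dots> = (\<Prod>i\<in>I. emeasure (M i) (A i))"
      using A h by (intro prod.cong refl) (metis d emeasure_distr)
    finally show "emeasure (distr (PiM I M) (PiM I M) ?h) (Pi\<^sub>E I A) = (\<Prod>i\<in>I. emeasure (M i) (A i))" .
  qed simp
qed

abbreviation gaussian_entries :: "('k \<times> 'd \<Rightarrow> real) measure" where
  "gaussian_entries \<equiv> PiM UNIV (\<lambda>_. std_gaussian)"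

definition matrix_of_entries :: "('k \<times> 'd \<Rightarrow> real) \<Rightarrow> real ^ 'd ^ 'k" where
  "matrix_of_entries f = (\<chi> i j. f (i, j))"

lemma gaussian_matrix_eq_distr: "gaussian_matrix = distr gaussian_entries borel matrix_of_entries"
  unfolding gaussian_matrix_def matrix_of_entries_def ..

lemma sets_gaussian_entries:
  "sets (gaussian_entries :: ('k::finite \<times> 'd::finite \<Rightarrow> real) measure) = sets borel"
proof -
  have "sets (gaussian_entries :: ('k \<times> 'd \<Rightarrow> real) measure) = sets (PiM UNIV (\<lambda>_::'k \<times> 'd. borel :: real measure))"
    by (intro sets_PiM_cong) (simp_all add: sets_std_gaussian)
  also have "\<dots> = sets borel" by (rule sets_PiM_equal_borel)
  finally show ?thesis .
qed

lemma space_gaussian_entries [simp]: "space gaussian_entries = UNIV"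
  by (simp add: space_PiM)

lemma measurable_matrix_of_entries:
  "(matrix_of_entries :: ('k::finite \<times> 'd::finite \<Rightarrow> real) \<Rightarrow> _) \<in> measurable gaussian_entries borel"
  unfolding measurable_cong_sets[OF sets_gaussian_entries refl] matrix_of_entries_def
  by (intro borel_measurable_continuous_onI continuous_intros continuous_on_product_coordinates)

lemma sets_gaussian_entries_preimage_closed:
  assumes "closed (A :: (real ^ 'd::finite ^ 'k::finite) set)"
  shows "matrix_of_entries -` A \<in> sets (gaussian_entries :: ('k \<times> 'd \<Rightarrow> real) measure)"
  using measurable_sets[OF measurable_matrix_of_entries borel_closed[OF assms]] by simp

lemma prob_space_gaussian_matrix:
  "prob_space (gaussian_matrix :: (real ^ 'd::finite ^ 'k::finite) measure)"
  unfolding gaussian_matrix_eq_distr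
  by (intro prob_space.prob_space_distr prob_space_PiM prob_space_std_gaussian measurable_matrix_of_entries)

lemma sets_gaussian_matrix [measurable_cong]:
  "sets (gaussian_matrix :: (real ^ 'd::finite ^ 'k::finite) measure) = sets borel"
  unfolding gaussian_matrix_eq_distr by simp

lemma distr_gaussian_matrix_eqI:
  fixes T :: "real ^ 'd::finite ^ 'k::finite \<Rightarrow> real ^ 'd ^ 'k"
  assumes T: "T \<in> borel_measurable borel" and \<phi>: "\<phi> \<in> measurable gaussian_entries gaussian_entries"
    and comm: "\<And>f. T (matrix_of_entries f) = matrix_of_entries (\<phi> f)"
    and pres: "distr gaussian_entries gaussian_entries \<phi> = gaussian_entries"
  shows "distr gaussian_matrix borel T = gaussian_matrix"
proof -
  have "distr gaussian_matrix borel T = distr gaussian_entries borel (T \<circ> matrix_of_entries)"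
    unfolding gaussian_matrix_eq_distr by (rule distr_distr[OF T measurable_matrix_of_entries])
  also have "T \<circ> matrix_of_entries = matrix_of_entries \<circ> \<phi>"
    using comm by auto
  also have "distr gaussian_entries borel (matrix_of_entries \<circ> \<phi>)
      = distr (distr gaussian_entries gaussian_entries \<phi>) borel matrix_of_entries"
    by (rule distr_distr[symmetric, OF measurable_matrix_of_entries \<phi>])
  finally show ?thesis
    unfolding pres gaussian_matrix_eq_distr .
qed

lemma integral_gaussian_matrix_invariant:
  fixes T :: "real ^ 'd::finite ^ 'k::finite \<Rightarrow> real ^ 'd ^ 'k" and f :: "_ \<Rightarrow> real"
  assumes T: "T \<in> borel_measurable borel" and D: "distr gaussian_matrix borel T = gaussian_matrix"
    and f: "f \<in> borel_measurable borel"
  shows "(\<integral>W. f (T W) \<partial>gaussian_matrix) = (\<integral>W. f W \<partial>gaussian_matrix)"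
proof -
  have "T \<in> measurable gaussian_matrix borel"
    using T by (simp add: measurable_cong_sets[OF sets_gaussian_matrix refl])
  from integral_distr[OF this f] show ?thesis
    unfolding D by simp
qed

definition map_rows :: "(real ^ 'd \<Rightarrow> real ^ 'd) \<Rightarrow> real ^ 'd ^ 'k \<Rightarrow> real ^ 'd ^ 'k" where
  "map_rows F W = (\<chi> r. F (W $ r))"

lemma borel_measurable_map_rows:
  fixes F :: "real ^ 'd \<Rightarrow> real ^ 'd"
  assumes "linear F"
  shows "(map_rows F :: real ^ 'd ^ 'k \<Rightarrow> _) \<in> borel_measurable borel"
proof -
  have F: "continuous_on UNIV F"
    using assms by (simp add: linear_continuous_on linear_conv_bounded_linear)
  have "continuous_on UNIV (\<lambda>W :: real ^ 'd ^ 'k. F (W $ r))" for r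
    by (rule continuous_on_compose2[OF F continuous_on_component[OF continuous_on_id]]) simp
  then show ?thesis
    unfolding map_rows_def by (intro borel_measurable_continuous_onI continuous_on_vec_lambda)
qed

lemma row_space_map_rows:
  assumes "linear F"
  shows "row_space (map_rows F W) = F ` row_space W"
proof -
  have "a v* map_rows F W = F (a v* W)" for a
    using assms by (simp add: vector_matrix_mult_eq_sum_rows map_rows_def linear_sum linear_scale)
  then show ?thesis
    unfolding row_space_def by (auto simp: image_image)
qed

lemma orth_residual_row_space_map_rows:
  assumes F: "linear F" "\<And>x y. F x \<bullet> F y = x \<bullet> y" "\<And>x. F (F x) = x"
  shows "orth_residual (row_space (map_rows F W)) x = F (orth_residual (row_space W) (F x))"
  unfolding row_space_map_rows[OF F(1)]
  by (rule orth_residual_isometry_image[OF subspace_row_space F])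

definition flip_coord :: "'d \<Rightarrow> real ^ 'd \<Rightarrow> real ^ 'd" where
  "flip_coord c x = (\<chi> j. (if j = c then - 1 else 1) * x $ j)"

lemma flip_coord_isometry:
  "linear (flip_coord c)" "flip_coord c x \<bullet> flip_coord c y = x \<bullet> y" "flip_coord c (flip_coord c x) = x"
  by (auto intro!: linearI sum.cong simp: flip_coord_def vec_eq_iff inner_vec_def)

definition swap_index :: "'d \<Rightarrow> 'd \<Rightarrow> 'd \<Rightarrow> 'd" where
  "swap_index i j c = (if c = i then j else if c = j then i else c)"

lemma swap_index_swap_index [simp]: "swap_index i j (swap_index i j c) = c"
  by (simp add: swap_index_def)

lemma bij_swap_index: "bij (swap_index i j)"
  by (metis bij_betw_byWitness iso_tuple_UNIV_I subset_UNIV swap_index_swap_index)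

definition swap_coords :: "'d \<Rightarrow> 'd \<Rightarrow> real ^ 'd \<Rightarrow> real ^ 'd" where
  "swap_coords i j x = (\<chi> c. x $ swap_index i j c)"

lemma swap_coords_isometry:
  "linear (swap_coords i j)" "swap_coords i j x \<bullet> swap_coords i j y = x \<bullet> y"
  "swap_coords i j (swap_coords i j x) = x"
proof -
  show "linear (swap_coords i j)"
    by (intro linearI) (simp_all add: swap_coords_def vec_eq_iff)
  show "swap_coords i j x \<bullet> swap_coords i j y = x \<bullet> y"
    unfolding swap_coords_def inner_vec_def
    using sum.reindex_bij_betw[OF bij_swap_index, of "\<lambda>c. x $ c * y $ c" i j] by simp
  show "swap_coords i j (swap_coords i j x) = x"
    by (simp add: swap_coords_def vec_eq_iff)
qed

lemma distr_gaussian_matrix_flip_coord: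
  "distr gaussian_matrix borel (map_rows (flip_coord c))
     = (gaussian_matrix :: (real ^ 'd::finite ^ 'k::finite) measure)"
proof (rule distr_gaussian_matrix_eqI)
  show "map_rows (flip_coord c) \<in> borel_measurable borel"
    by (rule borel_measurable_map_rows[OF flip_coord_isometry(1)])
  let ?h = "\<lambda>x::'k \<times> 'd. if snd x = c then (uminus :: real \<Rightarrow> real) else id"
  show "(\<lambda>f. \<lambda>x\<in>UNIV. ?h x (f x)) \<in> measurable gaussian_entries gaussian_entries"
    by (intro measurable_restrict measurable_compose[OF measurable_component_singleton])
      (auto simp: measurable_cong_sets[OF sets_std_gaussian sets_std_gaussian])
  show "map_rows (flip_coord c) (matrix_of_entries f) = matrix_of_entries (\<lambda>x\<in>UNIV. ?h x (f x))" for f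
    by (simp add: map_rows_def flip_coord_def matrix_of_entries_def vec_eq_iff)
  show "distr gaussian_entries gaussian_entries (\<lambda>f. \<lambda>x\<in>UNIV. ?h x (f x)) = gaussian_entries"
  proof (rule distr_PiM_componentwise)
    show "?h x \<in> measurable std_gaussian std_gaussian" for x
      by (auto simp: measurable_cong_sets[OF sets_std_gaussian sets_std_gaussian])
    show "distr std_gaussian std_gaussian (?h x) = std_gaussian" for x
      using distr_uminus_std_gaussian by (auto simp: distr_id2[OF refl] id_def)
  qed (simp_all add: prob_space_std_gaussian)
qed

lemma distr_gaussian_matrix_swap_coords:
  "distr gaussian_matrix borel (map_rows (swap_coords i j))
     = (gaussian_matrix :: (real ^ 'd::finite ^ 'k::finite) measure)"
proof (rule distr_gaussian_matrix_eqI)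
  show "map_rows (swap_coords i j) \<in> borel_measurable borel"
    by (rule borel_measurable_map_rows[OF swap_coords_isometry(1)])
  let ?s = "\<lambda>x::'k \<times> 'd. (fst x, swap_index i j (snd x))"
  show "(\<lambda>f. \<lambda>x\<in>UNIV. f (?s x)) \<in> measurable gaussian_entries gaussian_entries"
    by (intro measurable_restrict measurable_component_singleton) simp
  show "map_rows (swap_coords i j) (matrix_of_entries f) = matrix_of_entries (\<lambda>x\<in>UNIV. f (?s x))" for f
    by (simp add: map_rows_def swap_coords_def matrix_of_entries_def vec_eq_iff)
  have "inj ?s"
    by (intro injI) (metis prod.collapse prod.inject swap_index_swap_index)
  then show "distr gaussian_entries gaussian_entries (\<lambda>f. \<lambda>x\<in>UNIV. f (?s x)) = gaussian_entries"
    using distr_PiM_reindex[of UNIV "\<lambda>_. std_gaussian" ?s UNIV] prob_space_std_gaussian by simp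
qed

section \<open>The expected residual\<close>

lemma sqnorm_orth_residual_row_space_eq_INF:
  fixes W :: "real ^ 'd ^ 'k" and D :: "(real ^ 'k) set"
  assumes D: "\<And>X. open X \<Longrightarrow> X \<noteq> {} \<Longrightarrow> \<exists>d\<in>D. d \<in> X"
  shows "ennreal ((norm (orth_residual (row_space W) v))\<^sup>2) = (INF a\<in>D. ennreal ((norm (v - a v* W))\<^sup>2))"
proof (rule antisym)
  show "ennreal ((norm (orth_residual (row_space W) v))\<^sup>2) \<le> (INF a\<in>D. ennreal ((norm (v - a v* W))\<^sup>2))"
  proof (intro INF_greatest ennreal_leI power_mono)
    fix a
    have "a v* W \<in> row_space W"
      unfolding row_space_def by (rule rangeI)
    then show "norm (orth_residual (row_space W) v) \<le> norm (v - a v* W)"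
      by (rule norm_orth_residual_le[OF subspace_row_space])
  qed simp
next
  obtain a0 where a0: "a0 v* W = orth_proj (row_space W) v"
    using orth_proj_in[OF subspace_row_space] unfolding row_space_def by (metis imageE)
  define \<phi> where "\<phi> a = (norm (v - a v* W))\<^sup>2" for a
  have \<phi>0: "\<phi> a0 = (norm (orth_residual (row_space W) v))\<^sup>2"
    unfolding \<phi>_def orth_residual_def a0 ..
  have "continuous_on UNIV \<phi>"
    unfolding \<phi>_def by (intro continuous_intros)
  show "(INF a\<in>D. ennreal (\<phi> a)) \<le> ennreal ((norm (orth_residual (row_space W) v))\<^sup>2)"
  proof (rule ennreal_le_epsilon)
    fix e :: real assume e: "0 < e"
    have "open {a. \<phi> a < \<phi> a0 + e}"
      using \<open>continuous_on UNIV \<phi>\<close> by (intro open_Collect_less) (auto intro: continuous_intros)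
    moreover have "a0 \<in> {a. \<phi> a < \<phi> a0 + e}" using e by simp
    ultimately obtain a where a: "a \<in> D" "\<phi> a < \<phi> a0 + e" using D by blast
    have "(INF a\<in>D. ennreal (\<phi> a)) \<le> ennreal (\<phi> a0 + e)"
      using a by (intro INF_lower2[OF a(1)] ennreal_leI) simp
    then show "(INF a\<in>D. ennreal (\<phi> a)) \<le> ennreal ((norm (orth_residual (row_space W) v))\<^sup>2) + ennreal e"
      using e \<phi>0 by (simp add: ennreal_plus)
  qed
qed

lemma borel_measurable_sqnorm_orth_residual_row_space:
  "(\<lambda>W::real ^ 'd ^ 'k. (norm (orth_residual (row_space W) v))\<^sup>2) \<in> borel_measurable borel"
proof -
  obtain D :: "(real ^ 'k) set" where D: "countable D" "\<And>X. open X \<Longrightarrow> X \<noteq> {} \<Longrightarrow> \<exists>d\<in>D. d \<in> X"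
    using countable_dense_exists by blast
  have "(\<lambda>W::real ^ 'd ^ 'k. INF a\<in>D. ennreal ((norm (v - a v* W))\<^sup>2)) \<in> borel_measurable borel"
    by (intro borel_measurable_INF[OF D(1)] measurable_compose[OF _ measurable_ennreal]
        borel_measurable_continuous_onI continuous_intros)
  moreover have "(norm (orth_residual (row_space W) v))\<^sup>2
      = enn2real (INF a\<in>D. ennreal ((norm (v - a v* W))\<^sup>2))" for W :: "real ^ 'd ^ 'k"
    using sqnorm_orth_residual_row_space_eq_INF[OF D(2), of W v] by (metis enn2real_ennreal zero_le_power2)
  ultimately show ?thesis
    by simp
qed

definition residual_gram :: "'d \<Rightarrow> 'd \<Rightarrow> real ^ 'd ^ 'k \<Rightarrow> real" where
  "residual_gram i j W = orth_residual (row_space W) (axis i 1) \<bullet> orth_residual (row_space W) (axis j 1)"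

lemma sqnorm_orth_residual_row_space_eq_sum:
  "(norm (orth_residual (row_space W) w))\<^sup>2 = (\<Sum>i\<in>UNIV. \<Sum>j\<in>UNIV. w $ i * w $ j * residual_gram i j W)"
proof -
  let ?r = "orth_residual (row_space W)"
  have r: "?r w = (\<Sum>i\<in>UNIV. w $ i *\<^sub>R ?r (axis i 1))"
    using basis_expansion[of w] linear_orth_residual[OF subspace_row_space]
    by (metis (no_types, lifting) linear_scale linear_sum scalar_mult_eq_scaleR sum.cong)
  have "?r w \<bullet> ?r w = (\<Sum>i\<in>UNIV. w $ i * (?r (axis i 1) \<bullet> ?r w))"
    by (subst (1) r) (simp only: inner_sum_left inner_scaleR_left)
  also have "\<dots> = (\<Sum>i\<in>UNIV. \<Sum>j\<in>UNIV. w $ i * w $ j * residual_gram i j W)"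
    unfolding residual_gram_def
    by (subst r) (simp only: inner_sum_right inner_scaleR_right sum_distrib_left mult.assoc)
  finally show ?thesis
    unfolding power2_norm_eq_inner .
qed

lemma borel_measurable_residual_gram:
  "(residual_gram i j :: real ^ 'd ^ 'k \<Rightarrow> real) \<in> borel_measurable borel"
proof -
  have "(residual_gram i j :: real ^ 'd ^ 'k \<Rightarrow> real) = (\<lambda>W. ((norm (orth_residual (row_space W) (axis i 1 + axis j 1)))\<^sup>2
      - (norm (orth_residual (row_space W) (axis i 1 - axis j 1)))\<^sup>2) / 4)"
  proof (rule ext)
    fix W
    show "residual_gram i j W = ((norm (orth_residual (row_space W) (axis i 1 + axis j 1)))\<^sup>2
      - (norm (orth_residual (row_space W) (axis i 1 - axis j 1)))\<^sup>2) / 4"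
      using linear_orth_residual[OF subspace_row_space, of W]
      by (simp add: residual_gram_def power2_norm_eq_inner linear_add linear_diff inner_add_left
          inner_add_right inner_diff_left inner_diff_right inner_commute)
  qed
  then show ?thesis
    by (simp only:) (intro borel_measurable_divide borel_measurable_diff
        borel_measurable_sqnorm_orth_residual_row_space borel_measurable_const)
qed

lemma abs_residual_gram_le_1: "\<bar>residual_gram i j W\<bar> \<le> 1"
proof -
  have "norm (orth_residual (row_space W) (axis i 1)) \<le> 1" for i
    using norm_orth_residual_le_norm[OF subspace_row_space] norm_axis_1 by metis
  then show ?thesis
    unfolding residual_gram_def
    by (metis Cauchy_Schwarz_ineq2 mult_le_one norm_ge_zero order_trans)
qed

lemma integrable_residual_gram:
  "integrable (gaussian_matrix :: (real ^ 'd::finite ^ 'k::finite) measure) (residual_gram i j)"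
proof -
  interpret prob_space "gaussian_matrix :: (real ^ 'd ^ 'k) measure"
    by (rule prob_space_gaussian_matrix)
  show ?thesis
    using abs_residual_gram_le_1 borel_measurable_residual_gram
    by (intro integrable_const_bound[where B=1]) (auto simp: measurable_cong_sets[OF sets_gaussian_matrix refl])
qed

lemma residual_gram_map_rows:
  assumes "linear F" "\<And>x y. F x \<bullet> F y = x \<bullet> y" "\<And>x. F (F x) = x"
  shows "residual_gram i j (map_rows F W)
    = orth_residual (row_space W) (F (axis i 1)) \<bullet> orth_residual (row_space W) (F (axis j 1))"
  unfolding residual_gram_def orth_residual_row_space_map_rows[OF assms] assms(2) ..

text \<open>Flipping the sign of column \<open>i\<close> and swapping columns \<open>i\<close> and \<open>j\<close> preserve the
  Gaussian matrix, so the expected residual Gram matrix is a multiple of the identity.\<close>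
lemma integral_residual_gram:
  obtains c where "\<And>i j :: 'd::finite. (\<integral>W. residual_gram i j W
    \<partial>(gaussian_matrix :: (real ^ 'd ^ 'k::finite) measure)) = (if i = j then c else 0)"
proof -
  let ?G = "gaussian_matrix :: (real ^ 'd ^ 'k) measure"
  have off_diag: "(\<integral>W. residual_gram i j W \<partial>?G) = 0" if "i \<noteq> j" for i j
  proof -
    have "flip_coord i (axis i 1) = - axis i 1" "flip_coord i (axis j 1) = axis j 1"
      using that by (auto simp: flip_coord_def vec_eq_iff axis_def)
    then have "residual_gram i j (map_rows (flip_coord i) W) = - residual_gram i j W"
      for W :: "real ^ 'd ^ 'k"
      unfolding residual_gram_map_rows[OF flip_coord_isometry]
      using linear_orth_residual[OF subspace_row_space, of W]
      by (simp add: residual_gram_def linear_neg)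
    moreover have "(\<integral>W. residual_gram i j (map_rows (flip_coord i) W) \<partial>?G) = (\<integral>W. residual_gram i j W \<partial>?G)"
      by (rule integral_gaussian_matrix_invariant[OF borel_measurable_map_rows[OF flip_coord_isometry(1)]
          distr_gaussian_matrix_flip_coord borel_measurable_residual_gram])
    ultimately show ?thesis by simp
  qed
  have diag: "(\<integral>W. residual_gram i i W \<partial>?G) = (\<integral>W. residual_gram j j W \<partial>?G)" for i j
  proof -
    have "swap_coords i j (axis i 1) = axis j 1"
      by (auto simp: swap_coords_def swap_index_def vec_eq_iff axis_def)
    then have "residual_gram i i (map_rows (swap_coords i j) W) = residual_gram j j W"
      for W :: "real ^ 'd ^ 'k"
      unfolding residual_gram_map_rows[OF swap_coords_isometry] by (simp add: residual_gram_def)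
    moreover have "(\<integral>W. residual_gram i i (map_rows (swap_coords i j) W) \<partial>?G) = (\<integral>W. residual_gram i i W \<partial>?G)"
      by (rule integral_gaussian_matrix_invariant[OF borel_measurable_map_rows[OF swap_coords_isometry(1)]
          distr_gaussian_matrix_swap_coords borel_measurable_residual_gram])
    ultimately show ?thesis by simp
  qed
  show ?thesis
    using that[of "\<integral>W. residual_gram undefined undefined W \<partial>?G"] off_diag diag by metis
qed

lemma integral_sqnorm_orth_residual_row_space_le:
  fixes w :: "real ^ 'd::finite"
  assumes rank: "AE W in (gaussian_matrix :: (real ^ 'd ^ 'k::finite) measure). m \<le> rank W"
  shows "(\<integral>W. (norm (orth_residual (row_space W) w))\<^sup>2 \<partial>(gaussian_matrix :: (real ^ 'd ^ 'k) measure))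
    \<le> (1 - real m / real CARD('d)) * (norm w)\<^sup>2"
proof -
  let ?G = "gaussian_matrix :: (real ^ 'd ^ 'k) measure"
  interpret prob_space ?G
    by (rule prob_space_gaussian_matrix)
  obtain c where c: "\<And>i j :: 'd. (\<integral>W. residual_gram i j W \<partial>?G) = (if i = j then c else 0)"
    using integral_residual_gram by blast
  have trace: "(\<Sum>i\<in>UNIV. residual_gram i i W) = real CARD('d) - real (rank W)" for W :: "real ^ 'd ^ 'k"
    using sum_sqnorm_orth_residual_axis[OF subspace_row_space, of W]
    by (simp add: residual_gram_def power2_norm_eq_inner rank_eq_dim_row_space)
  have "real CARD('d) * c = (\<integral>W. (\<Sum>i\<in>UNIV. residual_gram i i W) \<partial>?G)"
    by (simp add: integrable_residual_gram c)
  also have "\<dots> \<le> (\<integral>W. real CARD('d) - real m \<partial>?G)"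
  proof (rule integral_mono_AE)
    show "AE W in ?G. (\<Sum>i\<in>UNIV. residual_gram i i W) \<le> real CARD('d) - real m"
      using rank by eventually_elim (simp add: trace)
  qed (simp_all add: integrable_residual_gram)
  also have "\<dots> = real CARD('d) - real m"
    by (simp add: prob_space)
  finally have c_le: "c \<le> 1 - real m / real CARD('d)"
    by (simp add: field_simps)
  have "(\<integral>W. (norm (orth_residual (row_space W) w))\<^sup>2 \<partial>?G)
      = (\<Sum>i\<in>UNIV. \<Sum>j\<in>UNIV. w $ i * w $ j * (\<integral>W. residual_gram i j W \<partial>?G))"
    unfolding sqnorm_orth_residual_row_space_eq_sum
    by (simp add: Bochner_Integration.integral_sum integrable_residual_gram)
  also have "\<dots> = c * (norm w)\<^sup>2"
    by (simp add: c if_distrib sum.delta power2_norm_eq_inner inner_vec_def sum_distrib_left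
        mult_ac cong: if_cong)
  also have "\<dots> \<le> (1 - real m / real CARD('d)) * (norm w)\<^sup>2"
    using c_le by (simp add: mult_right_mono)
  finally show ?thesis .
qed

lemma integrable_sqnorm_orth_residual_row_space:
  "integrable (gaussian_matrix :: (real ^ 'd::finite ^ 'k::finite) measure)
     (\<lambda>W. (norm (orth_residual (row_space W) w))\<^sup>2)"
  unfolding sqnorm_orth_residual_row_space_eq_sum
  by (intro Bochner_Integration.integrable_sum integrable_mult_right integrable_residual_gram)

section \<open>Gaussian matrices have full rank almost surely\<close>

text \<open>The coefficient vector is normalised to the unit sphere so that the set is closed.\<close>
definition dependent_rows :: "'k set \<Rightarrow> (real ^ 'd ^ 'k) set" where
  "dependent_rows L = {W. \<exists>c\<in>sphere 0 1. (\<forall>l. l \<notin> L \<longrightarrow> c $ l = 0) \<and> c v* W = 0}"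

lemma closed_dependent_rows: "closed (dependent_rows L :: (real ^ 'd ^ 'k) set)"
proof -
  let ?S = "sphere (0 :: real ^ 'k) 1 \<inter> (\<Inter>l\<in>-L. {c. c $ l = 0})"
  let ?T = "{p :: (real ^ 'k) \<times> (real ^ 'd ^ 'k). fst p v* snd p = 0}"
  have "compact ?S"
    by (intro compact_Int_closed compact_sphere closed_INT) (auto intro!: closed_Collect_eq continuous_intros)
  moreover have "closed ?T"
    by (intro closed_Collect_eq continuous_intros)
  ultimately have "closed {W. \<exists>c. c \<in> ?S \<and> (c, W) \<in> ?T}"
    by (rule closed_compact_projection)
  moreover have "{W. \<exists>c. c \<in> ?S \<and> (c, W) \<in> ?T} = dependent_rows L"
    unfolding dependent_rows_def by auto
  ultimately show ?thesis by simp
qed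

lemma dependent_rows_empty [simp]: "dependent_rows {} = {}"
proof -
  have "c = 0" if "\<forall>l. c $ l = 0" for c :: "real ^ 'k"
    using that by (simp add: vec_eq_iff)
  then show ?thesis
    unfolding dependent_rows_def by fastforce
qed

lemma eq_0_if_not_dependent_rows:
  fixes W :: "real ^ 'd ^ 'k" and L :: "'k set"
  assumes "W \<notin> dependent_rows L" "\<And>l. l \<notin> L \<Longrightarrow> c $ l = 0" "c v* W = 0"
  shows "c = 0"
proof (rule ccontr)
  assume "c \<noteq> 0"
  then have "c /\<^sub>R norm c \<in> sphere 0 1"
    by simp
  moreover have "(c /\<^sub>R norm c) v* W = 0"
    using assms(3) by (simp add: scaleR_vector_matrix_assoc)
  moreover have "(c /\<^sub>R norm c) $ l = 0" if "l \<notin> L" for l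
    using assms(2)[OF that] by simp
  ultimately have "W \<in> dependent_rows L"
    unfolding dependent_rows_def by blast
  with assms(1) show False ..
qed

lemma card_le_rank_if_not_dependent_rows:
  fixes W :: "real ^ 'd ^ 'k" and L :: "'k set"
  assumes W: "W \<notin> dependent_rows L"
  shows "card L \<le> rank W"
proof -
  have inj: "inj_on (($) W) L"
  proof
    fix l1 l2 assume l: "l1 \<in> L" "l2 \<in> L" "W $ l1 = W $ l2"
    have "(axis l1 1 - axis l2 1 :: real ^ 'k) $ l = 0" if "l \<notin> L" for l
      using that l by (auto simp: axis_def)
    then have "axis l1 1 - axis l2 1 = (0 :: real ^ 'k)"
      using l by (intro eq_0_if_not_dependent_rows[OF W])
        (auto simp: vector_matrix_mult_diff_distrib axis_vector_matrix_mult)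
    then show "l1 = l2"
      by (metis axis_eq_axis eq_iff_diff_eq_0 zero_neq_one)
  qed
  have "independent (($) W ` L)"
  proof
    assume "dependent (($) W ` L)"
    then obtain u where u: "\<exists>v\<in>($) W ` L. u v \<noteq> 0" "(\<Sum>v\<in>($) W ` L. u v *\<^sub>R v) = 0"
      using dependent_finite[of "($) W ` L"] by auto
    define c where "c = (\<chi> l. if l \<in> L then u (W $ l) else 0)"
    have "c v* W = (\<Sum>l\<in>L. u (W $ l) *\<^sub>R W $ l)"
      unfolding vector_matrix_mult_eq_sum_rows c_def
      by (simp add: if_distrib[of "\<lambda>x. x *\<^sub>R _"] sum.If_cases cong: if_cong)
    also have "\<dots> = 0"
      using u(2) by (simp add: sum.reindex[OF inj])
    finally have "c = 0"
      by (intro eq_0_if_not_dependent_rows[OF W]) (simp add: c_def)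
    with u(1) show False
      by (auto simp: c_def vec_eq_iff split: if_splits)
  qed
  moreover have "($) W ` L \<subseteq> rows W"
    by (auto simp: rows_def row_def vec_lambda_eta)
  ultimately have "card (($) W ` L) \<le> dim (rows W)"
    by (intro independent_card_le_dim)
  then show ?thesis
    using inj by (simp add: card_image row_rank_def)
qed

lemma row_in_span_if_dependent_rows_insert:
  fixes W :: "real ^ 'd ^ 'k" and L :: "'k set"
  assumes j: "j \<notin> L" and W: "W \<in> dependent_rows (insert j L)" "W \<notin> dependent_rows L"
  shows "W $ j \<in> span (($) W ` L)"
proof -
  obtain c :: "real ^ 'k" where c: "c \<in> sphere 0 1" "\<And>l. l \<notin> insert j L \<Longrightarrow> c $ l = 0" "c v* W = 0"
    using W(1) unfolding dependent_rows_def by blast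
  have sum: "c $ j *\<^sub>R W $ j + (\<Sum>l\<in>L. c $ l *\<^sub>R W $ l) = 0"
  proof -
    have "c v* W = (\<Sum>l\<in>insert j L. c $ l *\<^sub>R W $ l)"
      unfolding vector_matrix_mult_eq_sum_rows using c(2) by (intro sum.mono_neutral_right) auto
    then show ?thesis using c(3) j by simp
  qed
  have "c $ j \<noteq> 0"
  proof
    assume cj: "c $ j = 0"
    then have supp: "c $ l = 0" if "l \<notin> L" for l
      using c(2) that by (cases "l = j") auto
    then have "c v* W = (\<Sum>l\<in>L. c $ l *\<^sub>R W $ l)"
      unfolding vector_matrix_mult_eq_sum_rows by (intro sum.mono_neutral_right) auto
    then have "c = 0"
      using sum cj supp by (intro eq_0_if_not_dependent_rows[OF W(2)]) auto
    then show False
      using c(1) by simp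
  qed
  have "c $ j *\<^sub>R W $ j = - (\<Sum>l\<in>L. c $ l *\<^sub>R W $ l)"
    using sum by (simp add: eq_neg_iff_add_eq_0)
  then have "W $ j = (- 1 / c $ j) *\<^sub>R (\<Sum>l\<in>L. c $ l *\<^sub>R W $ l)"
    using \<open>c $ j \<noteq> 0\<close> by (metis (no_types, lifting) divide_minus_left scaleR_minus_left
        scaleR_minus_right scaleR_one scaleR_scaleR nonzero_divide_eq_eq)
  also have "\<dots> \<in> span (($) W ` L)"
    by (intro span_mul span_sum span_base) auto
  finally show ?thesis .
qed

lemma (in product_sigma_finite) emeasure_PiM_eq_0_if_sections:
  assumes IJ: "I \<inter> J = {}" "finite I" "finite J" and X: "X \<in> sets (PiM (I \<union> J) M)"
    and sections: "\<And>x. x \<in> space (PiM I M) \<Longrightarrow>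
      emeasure (PiM J M) ((\<lambda>y. merge I J (x, y)) -` X \<inter> space (PiM J M)) = 0"
  shows "emeasure (PiM (I \<union> J) M) X = 0"
proof -
  have "emeasure (PiM (I \<union> J) M) X
      = (\<integral>\<^sup>+x. emeasure (PiM J M) ((\<lambda>y. merge I J (x, y)) -` X \<inter> space (PiM J M)) \<partial>PiM I M)"
    by (rule emeasure_fold_integral[OF IJ X])
  also have "\<dots> = (\<integral>\<^sup>+x. 0 \<partial>PiM I M)"
    by (rule nn_integral_cong) (rule sections)
  finally show ?thesis by simp
qed

lemma product_sigma_finite_std_gaussian: "product_sigma_finite (\<lambda>_. std_gaussian)"
  by (simp add: product_sigma_finite_def prob_space_imp_sigma_finite prob_space_std_gaussian)

lemma emeasure_PiM_std_gaussian_hyperplane: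
  fixes A :: "'i set" and a :: "'i \<Rightarrow> real"
  assumes A: "finite A" "pivot \<in> A" and a: "a pivot \<noteq> 0"
    and Y: "Y \<in> sets (PiM A (\<lambda>_. std_gaussian))" and hyperplane: "\<And>y. y \<in> Y \<Longrightarrow> (\<Sum>i\<in>A. a i * y i) = 0"
  shows "emeasure (PiM A (\<lambda>_. std_gaussian)) Y = 0"
proof -
  interpret product_sigma_finite "\<lambda>_::'i. std_gaussian"
    by (rule product_sigma_finite_std_gaussian)
  let ?M = "\<lambda>_::'i. std_gaussian"
  define I where "I = A - {pivot}"
  have I: "I \<inter> {pivot} = {}" "finite I" and A_eq: "A = I \<union> {pivot}"
    using A by (auto simp: I_def)
  show ?thesis
  proof (subst A_eq, rule emeasure_PiM_eq_0_if_sections)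
    show "Y \<in> sets (PiM (I \<union> {pivot}) ?M)"
      using Y A_eq by simp
    fix x
    define t where "t = - (\<Sum>i\<in>I. a i * x i) / a pivot"
    have "(\<lambda>y. merge I {pivot} (x, y)) -` Y \<inter> space (PiM {pivot} ?M) \<subseteq> PiE {pivot} (\<lambda>_. {t})"
    proof
      fix y assume y: "y \<in> (\<lambda>y. merge I {pivot} (x, y)) -` Y \<inter> space (PiM {pivot} ?M)"
      from y have "merge I {pivot} (x, y) \<in> Y"
        by simp
      from hyperplane[OF this] have "0 = (\<Sum>i\<in>I \<union> {pivot}. a i * merge I {pivot} (x, y) i)"
        by (metis A_eq)
      also have "\<dots> = (\<Sum>i\<in>I. a i * merge I {pivot} (x, y) i) + a pivot * merge I {pivot} (x, y) pivot"
        using I by (simp add: sum.union_disjoint)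
      also have "\<dots> = (\<Sum>i\<in>I. a i * x i) + a pivot * y pivot"
        using I by (intro arg_cong2[where f="(+)"] sum.cong) auto
      finally have "y pivot = t"
        using a unfolding t_def by (simp add: field_simps)
      moreover have "y \<in> extensional {pivot}"
        using y by (simp add: space_PiM PiE_def)
      ultimately show "y \<in> PiE {pivot} (\<lambda>_. {t})"
        unfolding PiE_def by auto
    qed
    then have "emeasure (PiM {pivot} ?M) ((\<lambda>y. merge I {pivot} (x, y)) -` Y \<inter> space (PiM {pivot} ?M))
        \<le> emeasure (PiM {pivot} ?M) (PiE {pivot} (\<lambda>_. {t}))"
      by (intro emeasure_mono sets_PiM_I_finite) auto
    also have "\<dots> = 0"
      by (subst emeasure_PiM) (auto simp: emeasure_std_gaussian_singleton)
    finally show "emeasure (PiM {pivot} ?M) ((\<lambda>y. merge I {pivot} (x, y)) -` Y \<inter> space (PiM {pivot} ?M)) = 0"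
      by simp
  qed (use I in auto)
qed

text \<open>Fubini in the entries of row \<open>j\<close>: once the other rows are fixed, a new dependency
  forces row \<open>j\<close> into the span of the rows in \<open>L\<close>, a proper subspace, hence into a
  hyperplane, which is a null set for the Gaussian entries of row \<open>j\<close>.\<close>
lemma emeasure_gaussian_entries_new_dependent_row:
  fixes L :: "'k::finite set" and j :: 'k
  assumes j: "j \<notin> L" and card: "card L < CARD('d::finite)"
  shows "emeasure (gaussian_entries :: ('k \<times> 'd \<Rightarrow> real) measure)
    (matrix_of_entries -` (dependent_rows (insert j L) - dependent_rows L)) = 0"
proof -
  interpret product_sigma_finite "\<lambda>_::'k \<times> 'd. std_gaussian"
    by (rule product_sigma_finite_std_gaussian)
  let ?M = "\<lambda>_::'k \<times> 'd. std_gaussian"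
  let ?X = "matrix_of_entries -` (dependent_rows (insert j L) - dependent_rows L :: (real ^ 'd ^ 'k) set)"
  define R where "R = {x :: 'k \<times> 'd. fst x = j}"
  have IR: "- R \<inter> R = {}" "finite (- R)" "finite R" and U: "UNIV = - R \<union> R"
    by auto
  have X: "?X \<in> sets (PiM (- R \<union> R) ?M)"
    unfolding U[symmetric] vimage_Diff
    by (intro sets.Diff sets_gaussian_entries_preimage_closed closed_dependent_rows)
  show ?thesis
  proof (subst U, rule emeasure_PiM_eq_0_if_sections[OF IR X])
    fix x assume x: "x \<in> space (PiM (- R) ?M)"
    define row where "row l = (\<chi> c. x (l, c))" for l :: 'k
    have "dim (row ` L) \<le> card L"
      using dim_le_card'[of "row ` L"] card_image_le[of L row] by simp
    then have "dim (row ` L) < DIM(real ^ 'd)"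
      using card by simp
    then obtain a :: "real ^ 'd" where a: "a \<noteq> 0" "\<And>y. y \<in> span (row ` L) \<Longrightarrow> orthogonal a y"
      using orthogonal_to_subspace_exists[of "row ` L"] by blast
    obtain c0 where c0: "a $ c0 \<noteq> 0"
      using a(1) by (auto simp: vec_eq_iff)
    let ?Y = "(\<lambda>y. merge (- R) R (x, y)) -` ?X \<inter> space (PiM R ?M)"
    show "emeasure (PiM R ?M) ?Y = 0"
    proof (rule emeasure_PiM_std_gaussian_hyperplane[where a = "\<lambda>i. a $ snd i" and pivot = "(j, c0)"])
      show "finite R" "(j, c0) \<in> R" "a $ snd (j, c0) \<noteq> 0"
        using c0 by (auto simp: R_def)
      have "(\<lambda>y. merge (- R) R (x, y)) \<in> measurable (PiM R ?M) (PiM (- R \<union> R) ?M)"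
        using x by measurable
      then show "?Y \<in> sets (PiM R ?M)"
        by (rule measurable_sets[OF _ X])
      fix y assume y: "y \<in> ?Y"
      let ?W = "matrix_of_entries (merge (- R) R (x, y))"
      have "?W $ l = row l" if "l \<in> L" for l
        using that j by (auto simp: matrix_of_entries_def row_def vec_eq_iff R_def merge_def)
      then have "($) ?W ` L = row ` L"
        by force
      then have "?W $ j \<in> span (row ` L)"
        using row_in_span_if_dependent_rows_insert[OF j, of ?W] y by simp
      moreover have "?W $ j = (\<chi> c. y (j, c))"
        by (simp add: matrix_of_entries_def vec_eq_iff R_def merge_def)
      ultimately have "a \<bullet> (\<chi> c. y (j, c)) = 0"
        using a(2) by (simp add: orthogonal_def)
      then have "(\<Sum>c\<in>UNIV. a $ c * y (j, c)) = 0"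
        by (simp add: inner_vec_def)
      moreover have "R = range (Pair j)"
        by (auto simp: R_def)
      ultimately show "(\<Sum>i\<in>R. a $ snd i * y i) = 0"
        by (simp add: sum.reindex inj_on_def)
    qed
  qed
qed

lemma emeasure_gaussian_entries_dependent_rows:
  fixes L :: "'k::finite set"
  assumes "card L \<le> CARD('d::finite)"
  shows "emeasure (gaussian_entries :: ('k \<times> 'd \<Rightarrow> real) measure)
    (matrix_of_entries -` (dependent_rows L :: (real ^ 'd ^ 'k) set)) = 0"
  using finite[of L] assms
proof (induction L rule: finite_induct)
  case (insert j L)
  let ?E = "gaussian_entries :: ('k \<times> 'd \<Rightarrow> real) measure"
  let ?old = "matrix_of_entries -` (dependent_rows L :: (real ^ 'd ^ 'k) set)"
  let ?new = "matrix_of_entries -` (dependent_rows (insert j L) - dependent_rows L :: (real ^ 'd ^ 'k) set)"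
  have sets: "?old \<in> sets ?E" "?new \<in> sets ?E"
    unfolding vimage_Diff
    by (intro sets.Diff sets_gaussian_entries_preimage_closed closed_dependent_rows)+
  have "emeasure ?E (matrix_of_entries -` dependent_rows (insert j L)) \<le> emeasure ?E (?old \<union> ?new)"
    using sets by (intro emeasure_mono) auto
  also have "\<dots> \<le> emeasure ?E ?old + emeasure ?E ?new"
    using sets by (rule emeasure_subadditive)
  also have "\<dots> = 0"
    using insert by (simp add: emeasure_gaussian_entries_new_dependent_row)
  finally show ?case
    by simp
qed simp

lemma AE_gaussian_matrix_rank:
  "AE W in (gaussian_matrix :: (real ^ 'd::finite ^ 'k::finite) measure). min CARD('k) CARD('d) \<le> rank W"
proof -
  let ?G = "gaussian_matrix :: (real ^ 'd ^ 'k) measure"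
  obtain L :: "'k set" where L: "card L = min CARD('k) CARD('d)"
    using obtain_subset_with_card_n[of "min CARD('k) CARD('d)" "UNIV :: 'k set"] by auto
  have sets: "dependent_rows L \<in> sets (borel :: (real ^ 'd ^ 'k) measure)"
    by (intro borel_closed closed_dependent_rows)
  have "emeasure ?G (dependent_rows L)
      = emeasure gaussian_entries (matrix_of_entries -` (dependent_rows L :: (real ^ 'd ^ 'k) set))"
    unfolding gaussian_matrix_eq_distr using emeasure_distr[OF measurable_matrix_of_entries sets] by simp
  also have "\<dots> = 0"
    using emeasure_gaussian_entries_dependent_rows[where 'd='d, of L] L by simp
  finally have "dependent_rows L \<in> null_sets ?G"
    using sets by (intro null_setsI) (simp_all add: sets_gaussian_matrix)
  from AE_not_in[OF this] show ?thesis
    by eventually_elim (use L card_le_rank_if_not_dependent_rows in metis)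
qed

theorem theorem1:
  fixes M :: "(real ^ 'd) measure"
    and w :: "real ^ 'd" and b :: real
  assumes "prob_space M"
    and "sets M = sets borel"
    and "integrable M (\<lambda>z. norm z ^ 2)"
    and "pos_def_matrix (cov_matrix M)"
  shows "(\<integral>\<^sup>+ W. (INF p \<in> (UNIV :: ((real ^ 'k) \<times> real) set).
              \<integral>\<^sup>+ z. ennreal (\<bar>(w \<bullet> z + b) - (fst p \<bullet> ((W :: real ^ 'd ^ 'k) *v z) + snd p)\<bar> ^ 2) \<partial>M)
           \<partial>gaussian_matrix)
         \<le> ennreal (if CARD('k) < CARD('d)
                     then largest_eigenvalue (cov_matrix M) * (1 - real CARD('k) / real CARD('d)) * (norm w)\<^sup>2
                     else 0)"
proof -
  let ?l = "largest_eigenvalue (cov_matrix M)" and ?G = "gaussian_matrix :: (real ^ 'd ^ 'k) measure"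
  let ?D = "\<lambda>W. (norm (orth_residual (row_space W) w))\<^sup>2"
  have fin: "finite_measure M"
    using assms(1) by (rule prob_space.finite_measure)
  have l_pos: "?l > 0"
    by (rule largest_eigenvalue_pos[OF transpose_cov_matrix assms(4)])
  have "(\<integral>\<^sup>+ W. (INF p \<in> UNIV. \<integral>\<^sup>+ z. ennreal (\<bar>(w \<bullet> z + b) - (fst p \<bullet> (W *v z) + snd p)\<bar> ^ 2) \<partial>M) \<partial>?G)
      \<le> (\<integral>\<^sup>+ W. ennreal (?l * ?D W) \<partial>?G)"
    by (intro nn_integral_mono INF_affine_fit_error_le assms(2,3) fin)
  also have "\<dots> = ennreal (?l * (\<integral>W. ?D W \<partial>?G))"
    using l_pos by (subst nn_integral_eq_integral)
      (auto intro: integrable_mult_right integrable_sqnorm_orth_residual_row_space)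
  also have "\<dots> \<le> ennreal (?l * ((1 - real (min CARD('k) CARD('d)) / real CARD('d)) * (norm w)\<^sup>2))"
    using integral_sqnorm_orth_residual_row_space_le[OF AE_gaussian_matrix_rank] l_pos
    by (intro ennreal_leI mult_left_mono) auto
  also have "?l * ((1 - real (min CARD('k) CARD('d)) / real CARD('d)) * (norm w)\<^sup>2)
      = (if CARD('k) < CARD('d) then ?l * (1 - real CARD('k) / real CARD('d)) * (norm w)\<^sup>2 else 0)"
    by (auto simp: min_def)
  finally show ?thesis .
qed

end
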